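(* Let $\Sigma$ be an alphabet and $(C_1,\dots,C_K)$ a graph-induced covering of the full shift $\Sigma^{\mathbb Z}$. Then: (A) it is a memory covering if and only if every graph presentation of it is complete; (B) if it is a memory covering and non-redundant, then every graph presentation of it is complete and deterministic; (C) it is a future covering if and only if every graph presentation of it is co-complete; (D) if it is a future covering and non-redundant, then every graph presentation of it is co-complete and co-deterministic.
   Context: $\Sigma^{\mathbb Z}$: bi-infinite sequences $\bar z=(z_k)_{k\in\mathbb Z}$, shift $\sigma(\bar z)_k=z_{k+1}$. $\bar z^-=(z_k)_{k\le-1}$, $\bar z^+=(z_k)_{k\ge0}$; $\mathrm{Pre}(A)=\{\bar z^-:\bar z\in A\}$, $\mathrm{Post}(A)=\{\bar z^+:\bar z\in A\}$; for $P$ a set of left-infinite and $F$ a set of right-infinite sequences, $P\cdot F=\{\bar z\in\Sigma^{\mathbb Z}:\bar z^-\in P,\ \bar z^+\in F\}$. A labeled graph is $\mathcal G=(S,E)$, $S$ finite, $E\subseteq S\times S\times\Sigma$, every node having an incoming and an outgoing edge. Bi-infinite walk labeled by $\bar z$: $(e_k)_{k\in\mathbb Z}$ with $e_k=(s_k,s_{k+1},z_k)\in E$, starting at $s_0$; $\mathcal Z(\mathcal G)$, $\mathcal Z(\mathcal G,s)$: labels of all bi-infinite walks / of those starting at $s$. A graph-induced covering of $Z$ is a family $(C_1,\dots,C_K)$ for which some graph $\mathcal G$ with nodes $s_1,\dots,s_K$ (a presentation) has $\mathcal Z(\mathcal G)=Z$ and $C_j=\mathcal Z(\mathcal G,s_j)$;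 non-redundant if $C_i\cap C_j=\emptyset$ for $i\ne j$. It is a memory covering if $C_j=\mathrm{Pre}(C_j)\cdot\mathrm{Post}(Z)$ for all $j$, a future covering if $C_j=\mathrm{Pre}(Z)\cdot\mathrm{Post}(C_j)$ for all $j$. A graph is complete if each node has, for each $i\in\Sigma$, at least one outgoing edge labeled $i$; deterministic if at most one; co-complete (resp. co-deterministic) if each node has, for each $i\in\Sigma$, at least (resp. at most) one incoming edge labeled $i$. *)

theory Defs
  imports Main
begin

text \<open>The past z^- = (z_k)_{k <= -1} is encoded as the nat-indexed sequence n |-> z_{-n-1};
  the future z^+ = (z_k)_{k >= 0} as n |-> z_n.\<close>

definition past :: "(int \<Rightarrow> 'a) \<Rightarrow> (nat \<Rightarrow> 'a)" where
  "past z = (\<lambda>n. z (- int n - 1))"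

definition future :: "(int \<Rightarrow> 'a) \<Rightarrow> (nat \<Rightarrow> 'a)" where
  "future z = (\<lambda>n. z (int n))"

definition Pre :: "(int \<Rightarrow> 'a) set \<Rightarrow> (nat \<Rightarrow> 'a) set" where
  "Pre A = past ` A"

definition Post :: "(int \<Rightarrow> 'a) set \<Rightarrow> (nat \<Rightarrow> 'a) set" where
  "Post A = future ` A"

definition concat_seq :: "(nat \<Rightarrow> 'a) set \<Rightarrow> (nat \<Rightarrow> 'a) set \<Rightarrow> (int \<Rightarrow> 'a) set" where
  "concat_seq P F = {z. past z \<in> P \<and> future z \<in> F}"

text \<open>Labeled graphs with node set {1..K}; an edge (s, t, i) goes from s to t with label i.\<close>

definition labeled_graph :: "nat \<Rightarrow> (nat \<times> nat \<times> 'a) set \<Rightarrow> bool" where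
  "labeled_graph K E \<longleftrightarrow> E \<subseteq> {1..K} \<times> {1..K} \<times> UNIV \<and>
     (\<forall>s\<in>{1..K}. (\<exists>t i. (s, t, i) \<in> E) \<and> (\<exists>t i. (t, s, i) \<in> E))"

definition is_walk :: "(nat \<times> nat \<times> 'a) set \<Rightarrow> (int \<Rightarrow> nat) \<Rightarrow> (int \<Rightarrow> 'a) \<Rightarrow> bool" where
  "is_walk E s z \<longleftrightarrow> (\<forall>k. (s k, s (k + 1), z k) \<in> E)"

definition Zg :: "(nat \<times> nat \<times> 'a) set \<Rightarrow> (int \<Rightarrow> 'a) set" where
  "Zg E = {z. \<exists>s. is_walk E s z}"

definition Zs :: "(nat \<times> nat \<times> 'a) set \<Rightarrow> nat \<Rightarrow> (int \<Rightarrow> 'a) set" where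
  "Zs E v = {z. \<exists>s. is_walk E s z \<and> s 0 = v}"

definition presentation ::
  "(int \<Rightarrow> 'a) set \<Rightarrow> nat \<Rightarrow> (nat \<Rightarrow> (int \<Rightarrow> 'a) set) \<Rightarrow> (nat \<times> nat \<times> 'a) set \<Rightarrow> bool" where
  "presentation Z K C E \<longleftrightarrow> labeled_graph K E \<and> Zg E = Z \<and> (\<forall>j\<in>{1..K}. C j = Zs E j)"

definition graph_induced_covering ::
  "(int \<Rightarrow> 'a) set \<Rightarrow> nat \<Rightarrow> (nat \<Rightarrow> (int \<Rightarrow> 'a) set) \<Rightarrow> bool" where
  "graph_induced_covering Z K C \<longleftrightarrow> (\<exists>E. presentation Z K C E)"

definition non_redundant :: "nat \<Rightarrow> (nat \<Rightarrow> (int \<Rightarrow> 'a) set) \<Rightarrow> bool" where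
  "non_redundant K C \<longleftrightarrow> (\<forall>i\<in>{1..K}. \<forall>j\<in>{1..K}. i \<noteq> j \<longrightarrow> C i \<inter> C j = {})"

definition memory_covering ::
  "(int \<Rightarrow> 'a) set \<Rightarrow> nat \<Rightarrow> (nat \<Rightarrow> (int \<Rightarrow> 'a) set) \<Rightarrow> bool" where
  "memory_covering Z K C \<longleftrightarrow> (\<forall>j\<in>{1..K}. C j = concat_seq (Pre (C j)) (Post Z))"

definition future_covering ::
  "(int \<Rightarrow> 'a) set \<Rightarrow> nat \<Rightarrow> (nat \<Rightarrow> (int \<Rightarrow> 'a) set) \<Rightarrow> bool" where
  "future_covering Z K C \<longleftrightarrow> (\<forall>j\<in>{1..K}. C j = concat_seq (Pre Z) (Post (C j)))"

definition complete_graph :: "nat \<Rightarrow> (nat \<times> nat \<times> 'a) set \<Rightarrow> bool" where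
  "complete_graph K E \<longleftrightarrow> (\<forall>s\<in>{1..K}. \<forall>i. \<exists>t. (s, t, i) \<in> E)"

definition deterministic_graph :: "nat \<Rightarrow> (nat \<times> nat \<times> 'a) set \<Rightarrow> bool" where
  "deterministic_graph K E \<longleftrightarrow>
     (\<forall>s\<in>{1..K}. \<forall>i t t'. (s, t, i) \<in> E \<longrightarrow> (s, t', i) \<in> E \<longrightarrow> t = t')"

definition co_complete_graph :: "nat \<Rightarrow> (nat \<times> nat \<times> 'a) set \<Rightarrow> bool" where
  "co_complete_graph K E \<longleftrightarrow> (\<forall>s\<in>{1..K}. \<forall>i. \<exists>t. (t, s, i) \<in> E)"

definition co_deterministic_graph :: "nat \<Rightarrow> (nat \<times> nat \<times> 'a) set \<Rightarrow> bool" where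
  "co_deterministic_graph K E \<longleftrightarrow>
     (\<forall>s\<in>{1..K}. \<forall>i t t'. (t, s, i) \<in> E \<longrightarrow> (t', s, i) \<in> E \<longrightarrow> t = t')"

end

theory Submission
  imports Defs
begin

text \<open>A bi-infinite walk through node v at time 0 is exactly a backward path into v glued to
  a forward path out of v. So the class of v is a product P(v) \<cdot> F(v) of the label sets of
  backward paths into v and of forward paths out of v, both nonempty. On the full shift the
  memory condition at v therefore says that F(v) contains every right-infinite sequence, and
  this holds at every node iff the graph is complete. If moreover the classes are disjoint,
  the pasts P(t) of distinct nodes are disjoint, whereas two edges out of v with the same
  label i, to t and to t', extend any past of v to a common past of t and t'. Reversing all
  edges exchanges past and future, which yields the statements about future coverings.\<close>

definition is_path :: "(nat \<times> nat \<times> 'a) set \<Rightarrow> (nat \<Rightarrow> nat) \<Rightarrow> (nat \<Rightarrow> 'a) \<Rightarrow> bool" where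
  "is_path E f l \<longleftrightarrow> (\<forall>n. (f n, f (Suc n), l n) \<in> E)"

definition path_labels :: "(nat \<times> nat \<times> 'a) set \<Rightarrow> nat \<Rightarrow> (nat \<Rightarrow> 'a) set" where
  "path_labels E v = {l. \<exists>f. f 0 = v \<and> is_path E f l}"

definition reverse_graph :: "(nat \<times> nat \<times> 'a) set \<Rightarrow> (nat \<times> nat \<times> 'a) set" where
  "reverse_graph E = {(t, s, i). (s, t, i) \<in> E}"

definition splice :: "(nat \<Rightarrow> 'a) \<Rightarrow> (nat \<Rightarrow> 'a) \<Rightarrow> int \<Rightarrow> 'a" where
  "splice p q k = (if k < 0 then p (nat (- k - 1)) else q (nat k))"

lemma past_splice [simp]: "past (splice p q) = p"
  by (auto simp: past_def splice_def)

lemma future_splice [simp]: "future (splice p q) = q"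
  by (auto simp: future_def splice_def)

lemma splice_past_future [simp]: "splice (past z) (future z) = z"
  by (auto simp: past_def future_def splice_def)

lemma splice_in_concat_seq_iff [simp]: "splice p q \<in> concat_seq P F \<longleftrightarrow> p \<in> P \<and> q \<in> F"
  by (simp add: concat_seq_def)

lemma concat_seq_UNIV [simp]: "concat_seq UNIV UNIV = UNIV"
  by (simp add: concat_seq_def)

lemma Pre_concat_seq:
  assumes "q \<in> F"
  shows "Pre (concat_seq P F) = P"
proof
  show "P \<subseteq> Pre (concat_seq P F)"
  proof
    fix p assume "p \<in> P"
    with assms have "splice p q \<in> concat_seq P F" by simp
    then show "p \<in> Pre (concat_seq P F)" unfolding Pre_def by (metis image_eqI past_splice)
  qed
qed (auto simp: Pre_def concat_seq_def)

lemma Post_concat_seq: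
  assumes "p \<in> P"
  shows "Post (concat_seq P F) = F"
proof
  show "F \<subseteq> Post (concat_seq P F)"
  proof
    fix q assume "q \<in> F"
    with assms have "splice p q \<in> concat_seq P F" by simp
    then show "q \<in> Post (concat_seq P F)" unfolding Post_def by (metis image_eqI future_splice)
  qed
qed (auto simp: Post_def concat_seq_def)

lemma Post_UNIV [simp]: "Post UNIV = UNIV"
  using Post_concat_seq[of undefined UNIV UNIV] by simp

lemma Pre_UNIV [simp]: "Pre UNIV = UNIV"
  using Pre_concat_seq[of undefined UNIV UNIV] by simp

lemma concat_seq_Int: "concat_seq P F \<inter> concat_seq P' F' = concat_seq (P \<inter> P') (F \<inter> F')"
  by (auto simp: concat_seq_def)

lemma concat_seq_eq_empty_iff: "concat_seq P F = {} \<longleftrightarrow> P = {} \<or> F = {}"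
proof
  assume "concat_seq P F = {}"
  then show "P = {} \<or> F = {}" using splice_in_concat_seq_iff by blast
qed (auto simp: concat_seq_def)

lemma mem_reverse_graph [simp]: "(t, s, i) \<in> reverse_graph E \<longleftrightarrow> (s, t, i) \<in> E"
  by (simp add: reverse_graph_def)

lemma reverse_graph_reverse_graph [simp]: "reverse_graph (reverse_graph E) = E"
  by (auto simp: reverse_graph_def)

lemma labeled_graph_reverse_graphI: "labeled_graph K E \<Longrightarrow> labeled_graph K (reverse_graph E)"
  unfolding labeled_graph_def by (auto simp: reverse_graph_def)

lemma labeled_graph_reverse_graph [simp]: "labeled_graph K (reverse_graph E) \<longleftrightarrow> labeled_graph K E"
  using labeled_graph_reverse_graphI[of K "reverse_graph E"] labeled_graph_reverse_graphI[of K E]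
  by auto

lemma complete_graph_reverse_graph [simp]:
  "complete_graph K (reverse_graph E) \<longleftrightarrow> co_complete_graph K E"
  by (simp add: complete_graph_def co_complete_graph_def)

lemma deterministic_graph_reverse_graph [simp]:
  "deterministic_graph K (reverse_graph E) \<longleftrightarrow> co_deterministic_graph K E"
  by (simp add: deterministic_graph_def co_deterministic_graph_def)

lemma is_path_exists:
  assumes "v \<in> V"
    and step: "\<And>u n. u \<in> V \<Longrightarrow> \<exists>t i. t \<in> V \<and> (u, t, i) \<in> E \<and> Q n i"
  shows "\<exists>f l. f 0 = v \<and> is_path E f l \<and> (\<forall>n. Q n (l n))"
proof -
  have "\<exists>f. \<forall>n. (f n \<in> V \<and> (n = 0 \<longrightarrow> f n = v)) \<and> (\<exists>i. (f n, f (Suc n), i) \<in> E \<and> Q n i)"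
  proof (rule dependent_nat_choice)
    fix u and n :: nat
    assume "u \<in> V \<and> (n = 0 \<longrightarrow> u = v)"
    with step obtain t i where "t \<in> V" "(u, t, i) \<in> E" "Q n i" by blast
    then show "\<exists>t. (t \<in> V \<and> (Suc n = 0 \<longrightarrow> t = v)) \<and> (\<exists>i. (u, t, i) \<in> E \<and> Q n i)"
      by blast
  qed (use assms(1) in blast)
  then obtain f where "f 0 = v" and "\<forall>n. \<exists>i. (f n, f (Suc n), i) \<in> E \<and> Q n i"
    by blast
  then obtain l where "\<forall>n. (f n, f (Suc n), l n) \<in> E \<and> Q n (l n)"
    by metis
  with \<open>f 0 = v\<close> show ?thesis
    unfolding is_path_def by blast
qed

lemma path_labels_nonempty:
  assumes "labeled_graph K E" "v \<in> {1..K}"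
  shows "\<exists>l. l \<in> path_labels E v"
proof -
  have "\<exists>t i. t \<in> {1..K} \<and> (u, t, i) \<in> E" if "u \<in> {1..K}" for u
    using assms(1) that unfolding labeled_graph_def by blast
  then show ?thesis
    using is_path_exists[OF assms(2), of E "\<lambda>_ _. True"] unfolding path_labels_def by blast
qed

lemma path_labels_eq_UNIV:
  assumes "labeled_graph K E" "complete_graph K E" "v \<in> {1..K}"
  shows "path_labels E v = UNIV"
proof -
  have "l \<in> path_labels E v" for l
  proof -
    have "\<exists>t i. t \<in> {1..K} \<and> (u, t, i) \<in> E \<and> i = l n" if "u \<in> {1..K}" for u n
      using assms(1,2) that unfolding labeled_graph_def complete_graph_def by blast
    then obtain f l' where "f 0 = v" "is_path E f l'" "\<forall>n. l' n = l n"
      using is_path_exists[OF assms(3), of E "\<lambda>n i. i = l n"] by blast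
    moreover from this(3) have "l' = l" by blast
    ultimately show ?thesis unfolding path_labels_def by blast
  qed
  then show ?thesis by blast
qed

lemma complete_graph_iff_path_labels:
  assumes "labeled_graph K E"
  shows "complete_graph K E \<longleftrightarrow> (\<forall>v\<in>{1..K}. path_labels E v = UNIV)"
proof
  assume "\<forall>v\<in>{1..K}. path_labels E v = UNIV"
  then have "\<exists>f. f 0 = v \<and> is_path E f (\<lambda>_. i)" if "v \<in> {1..K}" for v i
    using that unfolding path_labels_def by blast
  then show "complete_graph K E"
    unfolding complete_graph_def is_path_def by metis
qed (use assms path_labels_eq_UNIV in blast)

lemma is_path_future: "is_walk E s z \<Longrightarrow> is_path E (\<lambda>n. s (int n)) (future z)"
  unfolding is_walk_def is_path_def future_def
proof
  fix n assume "\<forall>k. (s k, s (k + 1), z k) \<in> E"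
  then have "(s (int n), s (int n + 1), z (int n)) \<in> E" by blast
  then show "(s (int n), s (int (Suc n)), z (int n)) \<in> E" by (simp add: add.commute)
qed

lemma is_path_past: "is_walk E s z \<Longrightarrow> is_path (reverse_graph E) (\<lambda>n. s (- int n)) (past z)"
  unfolding is_walk_def is_path_def past_def
proof
  fix n assume "\<forall>k. (s k, s (k + 1), z k) \<in> E"
  then have "(s (- int n - 1), s (- int n - 1 + 1), z (- int n - 1)) \<in> E" by blast
  then have "(s (- int n - 1), s (- int n), z (- int n - 1)) \<in> E" by simp
  moreover have "- int (Suc n) = - int n - 1" by simp
  ultimately show "(s (- int n), s (- int (Suc n)), z (- int n - 1)) \<in> reverse_graph E"
    by (simp only: mem_reverse_graph)
qed

text \<open>The node at time -n-1 is g (Suc n); g 0 = f 0 is the node at time 0.\<close>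

lemma is_walk_splice:
  assumes past: "is_path (reverse_graph E) g p" and future: "is_path E f q" and "g 0 = f 0"
  shows "is_walk E (splice (\<lambda>n. g (Suc n)) f) (splice p q)"
  unfolding is_walk_def
proof
  fix k :: int
  have "k = - int (nat (- k - 2)) - 2 \<or> k = -1 \<or> k \<ge> 0" by linarith
  then consider m where "k = - int m - 2" | "k = -1" | "k \<ge> 0" by blast
  then show "(splice (\<lambda>n. g (Suc n)) f k, splice (\<lambda>n. g (Suc n)) f (k + 1), splice p q k) \<in> E"
  proof cases
    case 1
    have "nat (1 + int m) = Suc m" by simp
    with 1 past show ?thesis
      unfolding is_path_def splice_def by simp
  next
    case 2
    have "(g (Suc 0), g 0, p 0) \<in> E"
      using past unfolding is_path_def by simp
    with 2 \<open>g 0 = f 0\<close> show ?thesis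
      unfolding splice_def by simp
  next
    case 3
    then have "nat (k + 1) = Suc (nat k)" by simp
    with 3 future show ?thesis
      unfolding is_path_def splice_def by simp
  qed
qed

lemma Zs_eq_concat_seq:
  "Zs E v = concat_seq (path_labels (reverse_graph E) v) (path_labels E v)"
proof
  show "Zs E v \<subseteq> concat_seq (path_labels (reverse_graph E) v) (path_labels E v)"
  proof
    fix z assume "z \<in> Zs E v"
    then obtain s where walk: "is_walk E s z" and "s 0 = v"
      unfolding Zs_def by blast
    have "past z \<in> path_labels (reverse_graph E) v"
      unfolding path_labels_def using is_path_past[OF walk] \<open>s 0 = v\<close>
      by (intro CollectI exI[of _ "\<lambda>n. s (- int n)"]) simp
    moreover have "future z \<in> path_labels E v"
      unfolding path_labels_def using is_path_future[OF walk] \<open>s 0 = v\<close>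
      by (intro CollectI exI[of _ "\<lambda>n. s (int n)"]) simp
    ultimately show "z \<in> concat_seq (path_labels (reverse_graph E) v) (path_labels E v)"
      by (simp add: concat_seq_def)
  qed
next
  show "concat_seq (path_labels (reverse_graph E) v) (path_labels E v) \<subseteq> Zs E v"
  proof
    fix z assume "z \<in> concat_seq (path_labels (reverse_graph E) v) (path_labels E v)"
    then obtain g f where g: "g 0 = v" "is_path (reverse_graph E) g (past z)"
      and f: "f 0 = v" "is_path E f (future z)"
      unfolding concat_seq_def path_labels_def by blast
    have "is_walk E (splice (\<lambda>n. g (Suc n)) f) z"
      using is_walk_splice[OF g(2) f(2)] g(1) f(1) by simp
    moreover have "splice (\<lambda>n. g (Suc n)) f 0 = v"
      using f(1) by (simp add: splice_def)
    ultimately show "z \<in> Zs E v"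
      unfolding Zs_def by blast
  qed
qed

lemma case_nat_in_path_labels:
  assumes "(u, v, i) \<in> E" "l \<in> path_labels E v"
  shows "case_nat i l \<in> path_labels E u"
proof -
  from assms(2) obtain f where "f 0 = v" "is_path E f l"
    unfolding path_labels_def by blast
  with assms(1) have "is_path E (case_nat u f) (case_nat i l)"
    unfolding is_path_def by (simp split: nat.split)
  then show ?thesis
    unfolding path_labels_def by (intro CollectI exI[of _ "case_nat u f"]) simp
qed

lemma deterministic_graph_if_disjoint_pasts:
  assumes graph: "labeled_graph K E"
    and disjoint: "\<And>t t'. t \<in> {1..K} \<Longrightarrow> t' \<in> {1..K} \<Longrightarrow> t \<noteq> t' \<Longrightarrow>
      path_labels (reverse_graph E) t \<inter> path_labels (reverse_graph E) t' = {}"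
  shows "deterministic_graph K E"
  unfolding deterministic_graph_def
proof (intro ballI allI impI)
  fix v i t t' assume v: "v \<in> {1..K}" and e: "(v, t, i) \<in> E" and e': "(v, t', i) \<in> E"
  have "t \<in> {1..K}" "t' \<in> {1..K}"
    using graph e e' unfolding labeled_graph_def by blast+
  obtain l where "l \<in> path_labels (reverse_graph E) v"
    using path_labels_nonempty[OF labeled_graph_reverse_graphI[OF graph] v] by blast
  then have "case_nat i l \<in> path_labels (reverse_graph E) t \<inter> path_labels (reverse_graph E) t'"
    using case_nat_in_path_labels e e' by (metis IntI mem_reverse_graph)
  with disjoint \<open>t \<in> {1..K}\<close> \<open>t' \<in> {1..K}\<close> show "t = t'" by blast
qed

lemma labeled_graph_presentation: "presentation Z K C E \<Longrightarrow> labeled_graph K E"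
  unfolding presentation_def by blast

lemma presentation_class_eq_concat_seq:
  assumes "presentation Z K C E" "j \<in> {1..K}"
  shows "C j = concat_seq (path_labels (reverse_graph E) j) (path_labels E j)"
  using assms Zs_eq_concat_seq unfolding presentation_def by simp

lemma memory_covering_iff_path_labels:
  assumes pres: "presentation UNIV K C E"
  shows "memory_covering UNIV K C \<longleftrightarrow> (\<forall>j\<in>{1..K}. path_labels E j = UNIV)"
proof -
  have "C j = concat_seq (Pre (C j)) (Post UNIV) \<longleftrightarrow> path_labels E j = UNIV"
    if j: "j \<in> {1..K}" for j
  proof -
    note graph = labeled_graph_presentation[OF pres]
    obtain p q where p: "p \<in> path_labels (reverse_graph E) j" and q: "q \<in> path_labels E j"
      using path_labels_nonempty[OF labeled_graph_reverse_graphI[OF graph] j]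
        path_labels_nonempty[OF graph j] by blast
    note C_j = presentation_class_eq_concat_seq[OF pres j]
    show ?thesis
      unfolding C_j Pre_concat_seq[OF q] Post_UNIV
      by (metis Post_concat_seq[OF p])
  qed
  then show ?thesis unfolding memory_covering_def by simp
qed

lemma future_covering_iff_path_labels:
  assumes pres: "presentation UNIV K C E"
  shows "future_covering UNIV K C \<longleftrightarrow> (\<forall>j\<in>{1..K}. path_labels (reverse_graph E) j = UNIV)"
proof -
  have "C j = concat_seq (Pre UNIV) (Post (C j)) \<longleftrightarrow> path_labels (reverse_graph E) j = UNIV"
    if j: "j \<in> {1..K}" for j
  proof -
    note graph = labeled_graph_presentation[OF pres]
    obtain p q where p: "p \<in> path_labels (reverse_graph E) j" and q: "q \<in> path_labels E j"
      using path_labels_nonempty[OF labeled_graph_reverse_graphI[OF graph] j]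
        path_labels_nonempty[OF graph j] by blast
    note C_j = presentation_class_eq_concat_seq[OF pres j]
    show ?thesis
      unfolding C_j Post_concat_seq[OF p] Pre_UNIV
      by (metis Pre_concat_seq[OF q])
  qed
  then show ?thesis unfolding future_covering_def by simp
qed

lemma non_redundant_iff_path_labels:
  assumes pres: "presentation Z K C E"
  shows "non_redundant K C \<longleftrightarrow> (\<forall>t\<in>{1..K}. \<forall>t'\<in>{1..K}. t \<noteq> t' \<longrightarrow>
    path_labels (reverse_graph E) t \<inter> path_labels (reverse_graph E) t' = {} \<or>
    path_labels E t \<inter> path_labels E t' = {})"
  unfolding non_redundant_def
  by (simp add: presentation_class_eq_concat_seq[OF pres] concat_seq_Int concat_seq_eq_empty_iff)

lemma memory_covering_iff_complete_graph:
  assumes pres: "presentation UNIV K C E"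
  shows "memory_covering UNIV K C \<longleftrightarrow> complete_graph K E"
  using memory_covering_iff_path_labels[OF pres]
    complete_graph_iff_path_labels[OF labeled_graph_presentation[OF pres]]
  by simp

lemma future_covering_iff_co_complete_graph:
  assumes pres: "presentation UNIV K C E"
  shows "future_covering UNIV K C \<longleftrightarrow> co_complete_graph K E"
proof -
  have "future_covering UNIV K C \<longleftrightarrow> (\<forall>j\<in>{1..K}. path_labels (reverse_graph E) j = UNIV)"
    by (rule future_covering_iff_path_labels[OF pres])
  also have "\<dots> \<longleftrightarrow> complete_graph K (reverse_graph E)"
    using complete_graph_iff_path_labels[of K "reverse_graph E"] labeled_graph_presentation[OF pres]
    by simp
  finally show ?thesis by simp
qed

lemma deterministic_graph_if_memory_covering:
  assumes "memory_covering UNIV K C" "non_redundant K C" and pres: "presentation UNIV K C E"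
  shows "deterministic_graph K E"
proof (rule deterministic_graph_if_disjoint_pasts[OF labeled_graph_presentation[OF pres]])
  fix t t' assume "t \<in> {1..K}" "t' \<in> {1..K}" "t \<noteq> t'"
  moreover have "\<forall>j\<in>{1..K}. path_labels E j = UNIV"
    using assms(1) memory_covering_iff_path_labels[OF pres] by blast
  ultimately show "path_labels (reverse_graph E) t \<inter> path_labels (reverse_graph E) t' = {}"
    using assms(2) non_redundant_iff_path_labels[OF pres] by auto
qed

lemma co_deterministic_graph_if_future_covering:
  assumes "future_covering UNIV K C" "non_redundant K C" and pres: "presentation UNIV K C E"
  shows "co_deterministic_graph K E"
proof -
  have "deterministic_graph K (reverse_graph E)"
  proof (rule deterministic_graph_if_disjoint_pasts)
    show "labeled_graph K (reverse_graph E)"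
      using labeled_graph_presentation[OF pres] by simp
    fix t t' assume "t \<in> {1..K}" "t' \<in> {1..K}" "t \<noteq> t'"
    moreover have "\<forall>j\<in>{1..K}. path_labels (reverse_graph E) j = UNIV"
      using assms(1) future_covering_iff_path_labels[OF pres] by blast
    ultimately show "path_labels (reverse_graph (reverse_graph E)) t \<inter>
        path_labels (reverse_graph (reverse_graph E)) t' = {}"
      using assms(2) non_redundant_iff_path_labels[OF pres] by auto
  qed
  then show ?thesis by simp
qed

theorem mainTheorem8:
  fixes K :: nat and C :: "nat \<Rightarrow> (int \<Rightarrow> 'a::finite) set"
  assumes "graph_induced_covering UNIV K C"
  shows "(memory_covering UNIV K C \<longleftrightarrow>
            (\<forall>E. presentation UNIV K C E \<longrightarrow> complete_graph K E))
       \<and> (memory_covering UNIV K C \<and> non_redundant K C \<longrightarrow>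
            (\<forall>E. presentation UNIV K C E \<longrightarrow> complete_graph K E \<and> deterministic_graph K E))
       \<and> (future_covering UNIV K C \<longleftrightarrow>
            (\<forall>E. presentation UNIV K C E \<longrightarrow> co_complete_graph K E))
       \<and> (future_covering UNIV K C \<and> non_redundant K C \<longrightarrow>
            (\<forall>E. presentation UNIV K C E \<longrightarrow> co_complete_graph K E \<and> co_deterministic_graph K E))"
proof -
  obtain E0 where "presentation UNIV K C E0"
    using assms unfolding graph_induced_covering_def by blast
  then have "memory_covering UNIV K C \<longleftrightarrow>
      (\<forall>E. presentation UNIV K C E \<longrightarrow> complete_graph K E)"
    and "future_covering UNIV K C \<longleftrightarrow>
      (\<forall>E. presentation UNIV K C E \<longrightarrow> co_complete_graph K E)"
    using memory_covering_iff_complete_graph future_covering_iff_co_complete_graph by blast+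
  then show ?thesis
    using deterministic_graph_if_memory_covering co_deterministic_graph_if_future_covering
    by blast
qed

end
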